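(* Let $G=SL_2$ over $k=\overline{\mathbb F}_p$, $U$ the unipotent radical of the (negative) Borel subgroup, $r\ge1$, and $n$ a positive integer. Then the restriction of the Weyl module $V(np^r)$ to $U_r$ satisfies $V(np^r)|_{U_r}\cong k\oplus (kU_r)^{\oplus n}$.
   Context: $U_r$ is the $r$-th Frobenius kernel of $U$; its group algebra $kU_r=\operatorname{Dist}(U_r)$ is the divided power algebra with basis $x^{(i)}=x^i/i!$, $0\le i\le p^r-1$. For $\lambda\in\mathbb Z_{\ge0}=X(T)_+$, $V(\lambda)$ is the Weyl module of highest weight $\lambda$, which for $SL_2$ is the $\lambda$-th symmetric power of the natural $2$-dimensional module, of dimension $\lambda+1$. *)

theory Defs
  imports "Jordan_Normal_Form.Matrix" "HOL-Computational_Algebra.Polynomial"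
begin

(* A finite-dimensional kU_r-module of dimension d is encoded by the matrices
   (w.r.t. a fixed basis) by which the basis elements x^(i), 0 <= i < p^r, of
   kU_r = Dist(U_r) act.  Matrices act on column vectors. *)

(* Weyl module V(lam) = lam-th symmetric power of the natural module k^2 = span{x,y},
   basis e_a = x^a y^(lam-a), 0 <= a <= lam.  The negative unipotent
   u(t) = [[1,0],[t,1]] sends x |-> x + t y, y |-> y, hence
   u(t) e_a = sum_i t^i (a choose i) e_(a-i); the divided power x^(i) acts by the
   coefficient of t^i:  x^(i) e_a = (a choose i) e_(a-i). *)
definition weyl_act :: "nat \<Rightarrow> nat \<Rightarrow> 'a::field mat" where
  "weyl_act lam i = mat (lam + 1) (lam + 1)
     (\<lambda>(c, a). if c + i = a then of_nat (a choose i) else 0)"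

(* Left regular module kU_r, basis x^(j), 0 <= j < N = p^r, with
   x^(i) x^(j) = ((i+j) choose i) x^(i+j)  (zero if i+j >= N). *)
definition reg_act :: "nat \<Rightarrow> nat \<Rightarrow> 'a::field mat" where
  "reg_act N i = mat N N
     (\<lambda>(c, j). if c = i + j then of_nat (c choose i) else 0)"

definition triv_act :: "nat \<Rightarrow> 'a::field mat" where
  "triv_act i = mat 1 1 (\<lambda>_. if i = 0 then 1 else 0)"

definition dsum_act :: "(nat \<Rightarrow> 'a::field mat) \<Rightarrow> (nat \<Rightarrow> 'a mat) \<Rightarrow> nat \<Rightarrow> 'a mat" where
  "dsum_act A B i = four_block_mat (A i) (0\<^sub>m (dim_row (A i)) (dim_col (B i)))
                                   (0\<^sub>m (dim_row (B i)) (dim_col (A i))) (B i)"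

fun dpow_act :: "nat \<Rightarrow> nat \<Rightarrow> (nat \<Rightarrow> 'a::field mat) \<Rightarrow> nat \<Rightarrow> 'a mat" where
  "dpow_act 0 d A = (\<lambda>i. 0\<^sub>m 0 0)"
| "dpow_act (Suc n) d A = dsum_act A (dpow_act n d A)"

definition mod_iso :: "nat \<Rightarrow> nat \<Rightarrow> (nat \<Rightarrow> 'a::field mat) \<Rightarrow> (nat \<Rightarrow> 'a mat) \<Rightarrow> bool" where
  "mod_iso N d A B \<longleftrightarrow>
     (\<forall>i<N. A i \<in> carrier_mat d d \<and> B i \<in> carrier_mat d d) \<and>
     (\<exists>P \<in> carrier_mat d d. invertible_mat P \<and> (\<forall>i<N. P * A i = B i * P))"

end

theory Submission
  imports Defs "HOL-Computational_Algebra.Primes"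
begin

(* Write N = p^r.  The argument has three ingredients:
   (1) Binomial coefficients in characteristic p: (N + b choose i) = (b choose i) for i < N
       and (N-1 choose j) = (-1)^j.
   (2) Periodicity shows that V(N + m) = V(N-1) \<oplus> V(m) as U_r-modules, so
       V(nN) = V(N-1) \<oplus> ... \<oplus> V(N-1) \<oplus> V(0), where V(0) = k is trivial.
   (3) V(N-1) is the regular module kU_r: the anti-diagonal map x^(j) \<mapsto> (N-1 choose j) e_(N-1-j)
       is U_r-linear (an identity of binomial coefficients) and invertible by (1). *)

(* In characteristic p the binomial coefficients (p^r choose m), 0 < m < p^r, vanish:
   compare coefficients in (1 + X)^(p^r) = 1 + X^(p^r) (Frobenius). *)
lemma choose_prime_power_eq_0:
  assumes "prime CHAR('a::field)" and "0 < m" and "m < CHAR('a) ^ r"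
  shows "of_nat (CHAR('a) ^ r choose m) = (0::'a)"
proof -
  let ?N = "CHAR('a) ^ r"
  have "([:1, 1:] :: 'a poly) ^ ?N = (1 + [:0, 1:]) ^ ?N" by (simp add: one_pCons)
  also have "\<dots> = 1 ^ ?N + [:0, 1:] ^ ?N"
    by (rule freshmans_dream') (use assms(1) in auto)
  finally have "coeff (([:1, 1:] :: 'a poly) ^ ?N) m = coeff (1 + monom 1 ?N) m"
    by (simp add: monom_altdef)
  then show ?thesis
    using assms(2,3) by (simp add: coeff_linear_poly_power coeff_monom)
qed

(* Lucas-type periodicity: for i < p^r, (p^r + a choose i) = (a choose i) in characteristic p,
   by Vandermonde's identity and the previous lemma. *)
lemma choose_shift_prime_power:
  assumes "prime CHAR('a::field)" and "i < CHAR('a) ^ r"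
  shows "(of_nat ((CHAR('a) ^ r + a) choose i) :: 'a) = of_nat (a choose i)"
proof -
  let ?N = "CHAR('a) ^ r"
  have "(of_nat ((?N + a) choose i) :: 'a) = (\<Sum>k\<le>i. of_nat (a choose k) * of_nat (?N choose (i - k)))"
    by (simp add: add.commute flip: vandermonde)
  also have "\<dots> = (\<Sum>k\<le>i. if k = i then of_nat (a choose i) else 0)"
    using choose_prime_power_eq_0[OF assms(1)] assms(2) by (intro sum.cong) auto
  finally show ?thesis by simp
qed

(* (p^r - 1 choose j) = (-1)^j in characteristic p, by Pascal's rule and induction on j. *)
lemma choose_pred_prime_power:
  assumes "prime CHAR('a::field)" and "j < CHAR('a) ^ r"
  shows "(of_nat ((CHAR('a) ^ r - 1) choose j) :: 'a) = (-1) ^ j"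
  using assms(2)
proof (induction j)
  case (Suc j)
  let ?N = "CHAR('a) ^ r"
  have "?N choose Suc j = ((?N - 1) choose j) + ((?N - 1) choose Suc j)"
    using Suc.prems by (metis Suc_diff_1 binomial_Suc_Suc gr_implies_not0 neq0_conv)
  then have "(of_nat ((?N - 1) choose j) :: 'a) + of_nat ((?N - 1) choose Suc j) = 0"
    using choose_prime_power_eq_0[OF assms(1), of "Suc j" r] Suc.prems by (metis of_nat_add zero_less_Suc)
  then show ?case using Suc by (simp add: eq_neg_iff_add_eq_0 add.commute)
qed simp

lemma mod_isoI:
  assumes "\<And>i. i < N \<Longrightarrow> A i \<in> carrier_mat d d" and "\<And>i. i < N \<Longrightarrow> B i \<in> carrier_mat d d"
    and "P \<in> carrier_mat d d" and "Q \<in> carrier_mat d d"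
    and "P * Q = 1\<^sub>m d" and "Q * P = 1\<^sub>m d" and "\<And>i. i < N \<Longrightarrow> P * A i = B i * P"
  shows "mod_iso N d A B"
proof -
  have "invertible_mat P"
    using assms(3-6) unfolding invertible_mat_def inverts_mat_def square_mat.simps by auto
  then show ?thesis using assms unfolding mod_iso_def by blast
qed

lemma mod_isoE:
  assumes "mod_iso N d A B"
  obtains P Q where "P \<in> carrier_mat d d" and "Q \<in> carrier_mat d d"
    and "P * Q = 1\<^sub>m d" and "Q * P = 1\<^sub>m d" and "\<And>i. i < N \<Longrightarrow> P * A i = B i * P"
    and "\<And>i. i < N \<Longrightarrow> A i \<in> carrier_mat d d" and "\<And>i. i < N \<Longrightarrow> B i \<in> carrier_mat d d"
proof -
  obtain P where P: "P \<in> carrier_mat d d" and "invertible_mat P"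
    and intw: "\<And>i. i < N \<Longrightarrow> P * A i = B i * P"
    using assms unfolding mod_iso_def by blast
  then obtain Q where PQ: "P * Q = 1\<^sub>m d" and QP: "Q * P = 1\<^sub>m (dim_row Q)"
    unfolding invertible_mat_def inverts_mat_def by auto
  have "dim_row Q = d" using arg_cong[OF QP, of dim_col] P by simp
  moreover have "dim_col Q = d" using arg_cong[OF PQ, of dim_col] by simp
  ultimately show ?thesis
    using that[OF P _ PQ _ intw] QP assms unfolding mod_iso_def by auto
qed

lemma mod_iso_refl:
  assumes "\<And>i. i < N \<Longrightarrow> A i \<in> carrier_mat d d" and "\<And>i. i < N \<Longrightarrow> B i = A i"
  shows "mod_iso N d A B"
proof (rule mod_isoI[where P = "1\<^sub>m d" and Q = "1\<^sub>m d"])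
  fix i assume "i < N"
  then show "1\<^sub>m d * A i = B i * 1\<^sub>m d" using assms by (metis left_mult_one_mat right_mult_one_mat)
qed (use assms in auto)

lemma mod_iso_sym:
  assumes "mod_iso N d A B"
  shows "mod_iso N d B A"
proof -
  obtain P Q where P: "P \<in> carrier_mat d d" and Q: "Q \<in> carrier_mat d d"
    and PQ: "P * Q = 1\<^sub>m d" and QP: "Q * P = 1\<^sub>m d"
    and intw: "\<And>i. i < N \<Longrightarrow> P * A i = B i * P"
    and A: "\<And>i. i < N \<Longrightarrow> A i \<in> carrier_mat d d" and B: "\<And>i. i < N \<Longrightarrow> B i \<in> carrier_mat d d"
    using assms by (rule mod_isoE) blast
  have intw_inv: "Q * B i = A i * Q" if i: "i < N" for i
  proof -
    have "Q * B i = Q * B i * (P * Q)" using PQ Q B[OF i] by simp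
    also have "\<dots> = Q * (B i * P) * Q" using P Q B[OF i] by (simp add: assoc_mult_mat[of _ d d _ d _ d])
    also have "\<dots> = Q * (P * A i) * Q" using intw[OF i] by (simp add: assoc_mult_mat[of _ d d _ d _ d])
    also have "\<dots> = (Q * P) * (A i * Q)" using P Q A[OF i] by (simp add: assoc_mult_mat[of _ d d _ d _ d])
    also have "\<dots> = A i * Q" using QP A[OF i] Q by simp
    finally show ?thesis .
  qed
  show ?thesis by (rule mod_isoI[OF B A Q P QP PQ intw_inv])
qed

lemma mod_iso_trans [trans]:
  assumes "mod_iso N d A B" and "mod_iso N d B C"
  shows "mod_iso N d A C"
proof -
  obtain P Q where P: "P \<in> carrier_mat d d" and Q: "Q \<in> carrier_mat d d"
    and PQ: "P * Q = 1\<^sub>m d" and QP: "Q * P = 1\<^sub>m d"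
    and intw: "\<And>i. i < N \<Longrightarrow> P * A i = B i * P"
    and A: "\<And>i. i < N \<Longrightarrow> A i \<in> carrier_mat d d" and B: "\<And>i. i < N \<Longrightarrow> B i \<in> carrier_mat d d"
    using assms(1) by (rule mod_isoE) blast
  obtain P' Q' where P': "P' \<in> carrier_mat d d" and Q': "Q' \<in> carrier_mat d d"
    and PQ': "P' * Q' = 1\<^sub>m d" and QP': "Q' * P' = 1\<^sub>m d"
    and intw': "\<And>i. i < N \<Longrightarrow> P' * B i = C i * P'"
    and C: "\<And>i. i < N \<Longrightarrow> C i \<in> carrier_mat d d"
    using assms(2) by (rule mod_isoE) blast
  show ?thesis
  proof (rule mod_isoI[OF A C])
    have "P' * P * (Q * Q') = P' * ((P * Q) * Q')"
      using P Q P' Q' by (simp add: assoc_mult_mat[of _ d d _ d _ d])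
    then show "P' * P * (Q * Q') = 1\<^sub>m d" using P' Q' PQ PQ' by simp
    have "Q * Q' * (P' * P) = Q * ((Q' * P') * P)"
      using P Q P' Q' by (simp add: assoc_mult_mat[of _ d d _ d _ d])
    then show "Q * Q' * (P' * P) = 1\<^sub>m d" using P Q QP QP' by simp
    fix i assume i: "i < N"
    have "P' * P * A i = P' * (P * A i)" using P P' A[OF i] by (simp add: assoc_mult_mat[of _ d d _ d _ d])
    also have "\<dots> = (P' * B i) * P" using P P' B[OF i] intw[OF i] by (simp add: assoc_mult_mat[of _ d d _ d _ d])
    also have "\<dots> = C i * (P' * P)" using P P' C[OF i] intw'[OF i] by (simp add: assoc_mult_mat[of _ d d _ d _ d])
    finally show "P' * P * A i = C i * (P' * P)" .
  qed (use P P' Q Q' in auto)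
qed

definition block_diag :: "'a::zero mat \<Rightarrow> 'a mat \<Rightarrow> 'a mat" where
  "block_diag A B = four_block_mat A (0\<^sub>m (dim_row A) (dim_col B)) (0\<^sub>m (dim_row B) (dim_col A)) B"

lemma dsum_act_block_diag: "dsum_act A B i = block_diag (A i) (B i)"
  by (simp add: dsum_act_def block_diag_def)

lemma block_diag_square:
  "A \<in> carrier_mat a a \<Longrightarrow> B \<in> carrier_mat b b \<Longrightarrow>
     block_diag A B = four_block_mat A (0\<^sub>m a b) (0\<^sub>m b a) B"
  by (simp add: block_diag_def)

lemma block_diag_carrier:
  "A \<in> carrier_mat a a \<Longrightarrow> B \<in> carrier_mat b b \<Longrightarrow> block_diag A B \<in> carrier_mat (a + b) (a + b)"
  by (simp add: block_diag_def)

lemma block_diag_mult: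
  fixes A C :: "'a::semiring_1 mat"
  assumes "A \<in> carrier_mat a a" "B \<in> carrier_mat b b" "C \<in> carrier_mat a a" "D \<in> carrier_mat b b"
  shows "block_diag A B * block_diag C D = block_diag (A * C) (B * D)"
proof -
  have "block_diag A B * block_diag C D =
        four_block_mat A (0\<^sub>m a b) (0\<^sub>m b a) B * four_block_mat C (0\<^sub>m a b) (0\<^sub>m b a) D"
    using assms by (simp add: block_diag_def)
  also have "\<dots> = four_block_mat (A * C + 0\<^sub>m a b * 0\<^sub>m b a) (A * 0\<^sub>m a b + 0\<^sub>m a b * D)
                      (0\<^sub>m b a * C + B * 0\<^sub>m b a) (0\<^sub>m b a * 0\<^sub>m a b + B * D)"
    by (rule mult_four_block_mat) (use assms in auto)
  also have "\<dots> = block_diag (A * C) (B * D)"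
    using assms by (simp add: block_diag_def)
  finally show ?thesis .
qed

lemma block_diag_one: "block_diag (1\<^sub>m a) (1\<^sub>m b) = (1\<^sub>m (a + b) :: 'a::semiring_1 mat)"
  by (simp add: block_diag_def)

lemma mod_iso_dsum:
  assumes "mod_iso N a A A'" and "mod_iso N b B B'"
  shows "mod_iso N (a + b) (dsum_act A B) (dsum_act A' B')"
proof -
  obtain P Q where P: "P \<in> carrier_mat a a" and Q: "Q \<in> carrier_mat a a"
    and PQ: "P * Q = 1\<^sub>m a" and QP: "Q * P = 1\<^sub>m a"
    and intw: "\<And>i. i < N \<Longrightarrow> P * A i = A' i * P"
    and A: "\<And>i. i < N \<Longrightarrow> A i \<in> carrier_mat a a" and A': "\<And>i. i < N \<Longrightarrow> A' i \<in> carrier_mat a a"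
    using assms(1) by (rule mod_isoE) blast
  obtain P' Q' where P': "P' \<in> carrier_mat b b" and Q': "Q' \<in> carrier_mat b b"
    and PQ': "P' * Q' = 1\<^sub>m b" and QP': "Q' * P' = 1\<^sub>m b"
    and intw': "\<And>i. i < N \<Longrightarrow> P' * B i = B' i * P'"
    and B: "\<And>i. i < N \<Longrightarrow> B i \<in> carrier_mat b b" and B': "\<And>i. i < N \<Longrightarrow> B' i \<in> carrier_mat b b"
    using assms(2) by (rule mod_isoE) blast
  show ?thesis
  proof (rule mod_isoI[where P = "block_diag P P'" and Q = "block_diag Q Q'"])
    fix i assume i: "i < N"
    show "dsum_act A B i \<in> carrier_mat (a + b) (a + b)" "dsum_act A' B' i \<in> carrier_mat (a + b) (a + b)"
      using A[OF i] B[OF i] A'[OF i] B'[OF i] by (simp_all add: dsum_act_block_diag block_diag_carrier)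
    have "block_diag P P' * dsum_act A B i = block_diag (P * A i) (P' * B i)"
      using P P' A[OF i] B[OF i] by (simp add: dsum_act_block_diag block_diag_mult)
    also have "\<dots> = block_diag (A' i * P) (B' i * P')" using intw[OF i] intw'[OF i] by simp
    also have "\<dots> = dsum_act A' B' i * block_diag P P'"
      using P P' A'[OF i] B'[OF i] by (simp add: dsum_act_block_diag block_diag_mult)
    finally show "block_diag P P' * dsum_act A B i = dsum_act A' B' i * block_diag P P'" .
  qed (use P Q P' Q' PQ QP PQ' QP' in \<open>simp_all add: block_diag_carrier block_diag_mult block_diag_one\<close>)
qed

definition swap_mat :: "nat \<Rightarrow> nat \<Rightarrow> 'a::semiring_1 mat" where
  "swap_mat a b = four_block_mat (0\<^sub>m b a) (1\<^sub>m b) (1\<^sub>m a) (0\<^sub>m a b)"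

lemma swap_mat_carrier: "swap_mat a b \<in> carrier_mat (a + b) (a + b)"
proof -
  have "swap_mat a b \<in> carrier_mat (b + a) (a + b)"
    unfolding swap_mat_def by (rule four_block_carrier_mat) auto
  then show ?thesis by (metis add.commute)
qed

lemma swap_mat_inverse: "swap_mat a b * swap_mat b a = (1\<^sub>m (a + b) :: 'a::semiring_1 mat)"
proof -
  have "swap_mat a b * swap_mat b a =
          four_block_mat (0\<^sub>m b a * 0\<^sub>m a b + 1\<^sub>m b * 1\<^sub>m b) (0\<^sub>m b a * 1\<^sub>m a + 1\<^sub>m b * 0\<^sub>m b a)
            (1\<^sub>m a * 0\<^sub>m a b + 0\<^sub>m a b * 1\<^sub>m b) (1\<^sub>m a * 1\<^sub>m a + 0\<^sub>m a b * 0\<^sub>m b a)"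
    unfolding swap_mat_def
    by (rule mult_four_block_mat[OF zero_carrier_mat one_carrier_mat one_carrier_mat zero_carrier_mat
                                    zero_carrier_mat one_carrier_mat one_carrier_mat zero_carrier_mat])
  also have "\<dots> = (1\<^sub>m (b + a) :: 'a mat)" by simp
  finally show ?thesis by (simp add: add.commute)
qed

lemma swap_mat_block_diag:
  fixes A :: "'a::semiring_1 mat"
  assumes A: "A \<in> carrier_mat a a" and B: "B \<in> carrier_mat b b"
  shows "swap_mat a b * block_diag A B = block_diag B A * swap_mat a b"
proof -
  have "swap_mat a b * block_diag A B =
          four_block_mat (0\<^sub>m b a * A + 1\<^sub>m b * 0\<^sub>m b a) (0\<^sub>m b a * 0\<^sub>m a b + 1\<^sub>m b * B)
            (1\<^sub>m a * A + 0\<^sub>m a b * 0\<^sub>m b a) (1\<^sub>m a * 0\<^sub>m a b + 0\<^sub>m a b * B)"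
    unfolding swap_mat_def block_diag_square[OF A B]
    by (rule mult_four_block_mat[OF zero_carrier_mat one_carrier_mat one_carrier_mat zero_carrier_mat
                                    A zero_carrier_mat zero_carrier_mat B])
  also have "\<dots> = four_block_mat (0\<^sub>m b a) B A (0\<^sub>m a b)" using A B by simp
  also have "\<dots> = four_block_mat (B * 0\<^sub>m b a + 0\<^sub>m b a * 1\<^sub>m a) (B * 1\<^sub>m b + 0\<^sub>m b a * 0\<^sub>m a b)
            (0\<^sub>m a b * 0\<^sub>m b a + A * 1\<^sub>m a) (0\<^sub>m a b * 1\<^sub>m b + A * 0\<^sub>m a b)" using A B by simp
  also have "\<dots> = block_diag B A * swap_mat a b"
    unfolding swap_mat_def block_diag_square[OF B A]
    by (rule mult_four_block_mat[OF B zero_carrier_mat zero_carrier_mat A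
                                    zero_carrier_mat one_carrier_mat one_carrier_mat zero_carrier_mat, symmetric])
  finally show ?thesis .
qed

lemma mod_iso_dsum_comm:
  assumes A: "\<And>i. i < N \<Longrightarrow> A i \<in> carrier_mat a a" and B: "\<And>i. i < N \<Longrightarrow> B i \<in> carrier_mat b b"
  shows "mod_iso N (a + b) (dsum_act A B) (dsum_act B A)"
proof (rule mod_isoI[where P = "swap_mat a b" and Q = "swap_mat b a"])
  fix i assume i: "i < N"
  show "dsum_act A B i \<in> carrier_mat (a + b) (a + b)"
    unfolding dsum_act_block_diag by (rule block_diag_carrier[OF A[OF i] B[OF i]])
  have "dsum_act B A i \<in> carrier_mat (b + a) (b + a)"
    unfolding dsum_act_block_diag by (rule block_diag_carrier[OF B[OF i] A[OF i]])
  then show "dsum_act B A i \<in> carrier_mat (a + b) (a + b)" by (metis add.commute)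
  show "swap_mat a b * dsum_act A B i = dsum_act B A i * swap_mat a b"
    unfolding dsum_act_block_diag by (rule swap_mat_block_diag[OF A[OF i] B[OF i]])
next
  show "swap_mat a b \<in> carrier_mat (a + b) (a + b)" by (rule swap_mat_carrier)
  show "swap_mat b a \<in> carrier_mat (a + b) (a + b)" using swap_mat_carrier[of b a] by (metis add.commute)
  show "swap_mat a b * swap_mat b a = 1\<^sub>m (a + b)" by (rule swap_mat_inverse)
  show "swap_mat b a * swap_mat a b = 1\<^sub>m (a + b)" using swap_mat_inverse[of b a] by (metis add.commute)
qed

lemma block_diag_assoc: "block_diag A (block_diag B C) = block_diag (block_diag A B) C"
  unfolding block_diag_def by (rule assoc_four_block_mat)

lemma mod_iso_dsum_exchange:
  assumes A: "\<And>i. i < N \<Longrightarrow> A i \<in> carrier_mat a a" and B: "\<And>i. i < N \<Longrightarrow> B i \<in> carrier_mat b b"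
    and C: "\<And>i. i < N \<Longrightarrow> C i \<in> carrier_mat c c"
  shows "mod_iso N (a + (b + c)) (dsum_act A (dsum_act B C)) (dsum_act B (dsum_act A C))"
proof -
  have AB: "\<And>i. i < N \<Longrightarrow> dsum_act A B i \<in> carrier_mat (a + b) (a + b)"
    using A B by (simp add: dsum_act_block_diag block_diag_carrier)
  have "mod_iso N (a + b + c) (dsum_act A (dsum_act B C)) (dsum_act (dsum_act A B) C)"
    by (rule mod_iso_refl) (use AB C in \<open>simp_all add: dsum_act_block_diag block_diag_assoc block_diag_carrier\<close>)
  also have "mod_iso N (a + b + c) (dsum_act (dsum_act A B) C) (dsum_act (dsum_act B A) C)"
    by (rule mod_iso_dsum[OF mod_iso_dsum_comm[OF A B] mod_iso_refl]) (use C in auto)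
  also have "mod_iso N (a + b + c) (dsum_act (dsum_act B A) C) (dsum_act B (dsum_act A C))"
  proof (rule mod_iso_refl)
    fix i assume i: "i < N"
    have "block_diag (block_diag (B i) (A i)) (C i) \<in> carrier_mat (b + a + c) (b + a + c)"
      using A[OF i] B[OF i] C[OF i] by (intro block_diag_carrier)
    then show "dsum_act (dsum_act B A) C i \<in> carrier_mat (a + b + c) (a + b + c)"
      by (simp add: dsum_act_block_diag add.commute)
    show "dsum_act B (dsum_act A C) i = dsum_act (dsum_act B A) C i"
      by (simp add: dsum_act_block_diag block_diag_assoc)
  qed
  finally show ?thesis by (simp add: add.assoc)
qed

lemma reg_act_carrier: "reg_act N i \<in> carrier_mat N N"
  by (simp add: reg_act_def)

lemma weyl_act_carrier: "weyl_act m i \<in> carrier_mat (m + 1) (m + 1)"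
  by (simp add: weyl_act_def)

lemma triv_act_carrier: "triv_act i \<in> carrier_mat 1 1"
  by (simp add: triv_act_def)

lemma dpow_act_carrier:
  assumes "A i \<in> carrier_mat d d"
  shows "dpow_act n e A i \<in> carrier_mat (n * d) (n * d)"
  by (induction n) (use assms in \<open>simp_all add: dsum_act_block_diag block_diag_carrier\<close>)

(* The anti-diagonal matrix with weights (N-1 choose j); it represents the map
   kU_r \<rightarrow> V(N-1), x^(j) \<mapsto> (N-1 choose j) e_(N-1-j), in the bases of the two modules. *)
definition rev_mat :: "nat \<Rightarrow> 'a::field mat" where
  "rev_mat N = mat N N (\<lambda>(a, j). if a + j = N - 1 then of_nat ((N - 1) choose j) else 0)"

lemma rev_mat_carrier: "rev_mat N \<in> carrier_mat N N"
  by (simp add: rev_mat_def)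

lemma rev_mat_mult_left:
  assumes M: "M \<in> carrier_mat N k" and a: "a < N" and y: "y < k"
  shows "(rev_mat N * M) $$ (a, y) = of_nat ((N - 1) choose (N - 1 - a)) * M $$ (N - 1 - a, y)"
proof -
  have "(rev_mat N * M) $$ (a, y) =
        (\<Sum>c<N. (if a + c = N - 1 then of_nat ((N - 1) choose c) else 0) * M $$ (c, y))"
    using M a y by (simp add: rev_mat_def scalar_prod_def atLeast0LessThan)
  also have "\<dots> = (\<Sum>c<N. if c = N - 1 - a then of_nat ((N - 1) choose c) * M $$ (c, y) else 0)"
    using a by (intro sum.cong) auto
  also have "\<dots> = of_nat ((N - 1) choose (N - 1 - a)) * M $$ (N - 1 - a, y)"
    using a by simp
  finally show ?thesis .
qed

lemma rev_mat_mult_right: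
  assumes M: "M \<in> carrier_mat k N" and x: "x < k" and j: "j < N"
  shows "(M * rev_mat N) $$ (x, j) = M $$ (x, N - 1 - j) * of_nat ((N - 1) choose j)"
proof -
  have "(M * rev_mat N) $$ (x, j) =
        (\<Sum>c<N. M $$ (x, c) * (if c + j = N - 1 then of_nat ((N - 1) choose j) else 0))"
    using M x j by (simp add: rev_mat_def scalar_prod_def atLeast0LessThan)
  also have "\<dots> = (\<Sum>c<N. if c = N - 1 - j then M $$ (x, c) * of_nat ((N - 1) choose j) else 0)"
    using j by (intro sum.cong) auto
  also have "\<dots> = M $$ (x, N - 1 - j) * of_nat ((N - 1) choose j)"
    using j by simp
  finally show ?thesis .
qed

(* The map represented by rev_mat is kU_r-linear over any field; the required identity
   (N-1 choose i+j)(i+j choose i) = (N-1-j choose i)(N-1 choose j) is choose_mult. *)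
lemma rev_mat_intertwines:
  assumes "i < N"
  shows "rev_mat N * reg_act N i = (weyl_act (N - 1) i :: 'a::field mat) * rev_mat N"
proof (rule eq_matI)
  fix a j assume "a < dim_row (weyl_act (N - 1) i * rev_mat N :: 'a mat)"
    and "j < dim_col (weyl_act (N - 1) i * rev_mat N :: 'a mat)"
  then have a: "a < N" and j: "j < N" using assms by (simp_all add: weyl_act_def rev_mat_def)
  have "(rev_mat N * reg_act N i) $$ (a, j) =
        of_nat ((N - 1) choose (N - 1 - a)) * reg_act N i $$ (N - 1 - a, j)"
    by (rule rev_mat_mult_left[OF reg_act_carrier a j])
  also have "\<dots> = (if N - 1 - a = i + j then of_nat ((N - 1) choose (i + j)) * of_nat ((i + j) choose i) else 0)"
    using a j by (auto simp: reg_act_def)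
  also have "\<dots> = (if a + i = N - 1 - j then of_nat ((N - 1 - j) choose i) * of_nat ((N - 1) choose j) else 0)"
    using a j choose_mult[of j "i + j" "N - 1"]
    by (auto simp: binomial_symmetric[of j "i + j"] mult.commute simp flip: of_nat_mult)
  also have "\<dots> = weyl_act (N - 1) i $$ (a, N - 1 - j) * of_nat ((N - 1) choose j)"
    using a j by (simp add: weyl_act_def)
  also have "\<dots> = (weyl_act (N - 1) i * rev_mat N) $$ (a, j)"
    using weyl_act_carrier[of "N - 1" i] assms by (intro rev_mat_mult_right[symmetric, OF _ a j]) simp
  finally show "(rev_mat N * reg_act N i) $$ (a, j) = (weyl_act (N - 1) i * rev_mat N) $$ (a, j)" .
qed (use assms in \<open>simp_all add: rev_mat_def reg_act_def weyl_act_def\<close>)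

(* For N = p^r the weights are \<plusminus>1, so rev_mat is an involution. *)
lemma rev_mat_square:
  assumes "prime CHAR('a::field)" and N: "N = CHAR('a) ^ r"
  shows "rev_mat N * rev_mat N = (1\<^sub>m N :: 'a mat)"
proof (rule eq_matI)
  fix a y assume "a < dim_row (1\<^sub>m N :: 'a mat)" and "y < dim_col (1\<^sub>m N :: 'a mat)"
  then have a: "a < N" and y: "y < N" by simp_all
  have sym: "(N - 1) choose (N - 1 - a) = (N - 1) choose a"
    using binomial_symmetric[of a "N - 1"] a by simp
  have "(rev_mat N * rev_mat N) $$ (a, y) =
        of_nat ((N - 1) choose (N - 1 - a)) * (rev_mat N :: 'a mat) $$ (N - 1 - a, y)"
    by (rule rev_mat_mult_left[OF rev_mat_carrier a y])
  also have "\<dots> = (if y = a then of_nat ((N - 1) choose a) * of_nat ((N - 1) choose a) else 0)"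
    using a y sym by (auto simp: rev_mat_def)
  also have "\<dots> = (if y = a then ((-1) * (-1)) ^ a else 0)"
    using choose_pred_prime_power[OF assms(1), of a r] a N by (simp add: power_mult_distrib)
  also have "\<dots> = (1\<^sub>m N :: 'a mat) $$ (a, y)" using a y by auto
  finally show "(rev_mat N * rev_mat N) $$ (a, y) = (1\<^sub>m N :: 'a mat) $$ (a, y)" .
qed (simp_all add: rev_mat_def)

lemma weyl_block_iso_reg:
  assumes "prime CHAR('a::field)" and N: "N = CHAR('a) ^ r"
  shows "mod_iso N N (weyl_act (N - 1) :: nat \<Rightarrow> 'a mat) (reg_act N)"
proof -
  have "N > 0" using N prime_gt_0_nat[OF assms(1)] by simp
  then have W: "\<And>i. (weyl_act (N - 1) i :: 'a mat) \<in> carrier_mat N N"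
    using weyl_act_carrier by (metis Suc_diff_1 Suc_eq_plus1)
  have "mod_iso N N (reg_act N) (weyl_act (N - 1) :: nat \<Rightarrow> 'a mat)"
    by (rule mod_isoI[OF reg_act_carrier W rev_mat_carrier rev_mat_carrier
          rev_mat_square[OF assms] rev_mat_square[OF assms] rev_mat_intertwines])
  then show ?thesis by (rule mod_iso_sym)
qed

(* Restricted to U_r, V(p^r + m) splits as V(p^r - 1) \<oplus> V(m): the weight vectors e_a with
   a < p^r span a submodule and the coefficients linking the two blocks, (p^r + b choose i)
   with b < i < p^r, vanish by periodicity, which also identifies the second block with V(m). *)
lemma weyl_act_split:
  assumes "prime CHAR('a::field)" and N: "N = CHAR('a) ^ r" and i: "i < N"
  shows "(weyl_act (N + m) i :: 'a mat) = dsum_act (weyl_act (N - 1)) (weyl_act m) i"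
proof -
  have N0: "N > 0" using i by simp
  have shift: "(of_nat ((N + b) choose i) :: 'a) = of_nat (b choose i)" for b
    using choose_shift_prime_power[OF assms(1)] N i by blast
  have low: "(of_nat ((N + b) choose i) :: 'a) = 0" if "b < i" for b
    using shift[of b] that by (simp add: binomial_eq_0)
  have W: "(weyl_act (N - 1) i :: 'a mat) \<in> carrier_mat N N"
    using weyl_act_carrier N0 by (metis Suc_diff_1 Suc_eq_plus1)
  show ?thesis
    unfolding dsum_act_block_diag block_diag_square[OF W weyl_act_carrier]
  proof (rule eq_matI)
    fix x y assume "x < dim_row (four_block_mat (weyl_act (N - 1) i) (0\<^sub>m N (m + 1))
        (0\<^sub>m (m + 1) N) (weyl_act m i) :: 'a mat)"
      and "y < dim_col (four_block_mat (weyl_act (N - 1) i) (0\<^sub>m N (m + 1))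
        (0\<^sub>m (m + 1) N) (weyl_act m i) :: 'a mat)"
    then have x: "x < N + m + 1" and y: "y < N + m + 1"
      using W weyl_act_carrier[of m i, where 'a = 'a] unfolding carrier_mat_def by auto
    consider "x < N" "y < N" | "x < N" "N \<le> y" | "N \<le> x" "y < N" | "N \<le> x" "N \<le> y"
      by linarith
    then show "(weyl_act (N + m) i :: 'a mat) $$ (x, y) = four_block_mat (weyl_act (N - 1) i)
        (0\<^sub>m N (m + 1)) (0\<^sub>m (m + 1) N) (weyl_act m i) $$ (x, y)"
    proof cases
      case 1
      then show ?thesis using x y W by (simp add: weyl_act_def)
    next
      case 2
      then have "x + i = y \<Longrightarrow> y - N < i" by linarith
      then show ?thesis using 2 x y W low[of "y - N"] by (auto simp: weyl_act_def)
    next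
      case 3
      then show ?thesis using x y W by (simp add: weyl_act_def)
    next
      case 4
      then show ?thesis using x y W shift[of "y - N"] by (auto simp: weyl_act_def)
    qed
  qed (use N0 in \<open>simp_all add: weyl_act_def\<close>)
qed

(* The main result for an arbitrary field of characteristic p and every n \<ge> 0,
   by induction on n using the splitting V((n+1)p^r) = V(p^r - 1) \<oplus> V(np^r). *)
lemma weyl_multiple_iso:
  assumes "prime CHAR('a::field)" and N: "N = CHAR('a) ^ r"
  shows "mod_iso N (n * N + 1) (weyl_act (n * N) :: nat \<Rightarrow> 'a mat)
           (dsum_act triv_act (dpow_act n N (reg_act N)))"
proof (induction n)
  case 0
  have "dsum_act triv_act (dpow_act 0 N (reg_act N)) i = (weyl_act 0 i :: 'a mat)" for i
    by (rule eq_matI) (auto simp: dsum_act_def triv_act_def weyl_act_def)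
  then show ?case
    using weyl_act_carrier[of 0, where 'a = 'a] by (intro mod_iso_refl) simp_all
next
  case (Suc n)
  let ?R = "reg_act N :: nat \<Rightarrow> 'a mat" and ?X = "dpow_act n N (reg_act N) :: nat \<Rightarrow> 'a mat"
  have "mod_iso N (N + (n * N + 1)) (weyl_act (Suc n * N) :: nat \<Rightarrow> 'a mat) (dsum_act (weyl_act (N - 1)) (weyl_act (n * N)))"
  proof (rule mod_iso_refl)
    fix i assume i: "i < N"
    show "(weyl_act (Suc n * N) i :: 'a mat) \<in> carrier_mat (N + (n * N + 1)) (N + (n * N + 1))"
      using weyl_act_carrier[of "Suc n * N" i, where 'a = 'a] by (simp add: add.assoc)
    show "dsum_act (weyl_act (N - 1)) (weyl_act (n * N)) i = (weyl_act (Suc n * N) i :: 'a mat)"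
      using weyl_act_split[OF assms i, of "n * N"] by simp
  qed
  also have "mod_iso N (N + (n * N + 1)) \<dots> (dsum_act ?R (dsum_act triv_act ?X))"
    by (rule mod_iso_dsum[OF weyl_block_iso_reg[OF assms] Suc.IH])
  also have "mod_iso N (N + (n * N + 1)) \<dots> (dsum_act triv_act (dsum_act ?R ?X))"
  proof -
    have "mod_iso N (N + (1 + n * N)) (dsum_act ?R (dsum_act triv_act ?X)) (dsum_act triv_act (dsum_act ?R ?X))"
      by (rule mod_iso_dsum_exchange[OF reg_act_carrier triv_act_carrier dpow_act_carrier[OF reg_act_carrier]])
    then show ?thesis by (simp add: add.commute)
  qed
  finally show ?case by (simp add: add.assoc)
qed

theorem proposition7p2:
  fixes p r n :: nat
  assumes "prime p" and "CHAR('a::field) = p"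
    and "\<forall>q :: 'a poly. degree q \<ge> 1 \<longrightarrow> (\<exists>x. poly q x = 0)"
    and "r \<ge> 1" and "n \<ge> 1"
  shows "mod_iso (p ^ r) (n * p ^ r + 1)
           (weyl_act (n * p ^ r) :: nat \<Rightarrow> 'a mat)
           (dsum_act triv_act (dpow_act n (p ^ r) (reg_act (p ^ r))))"
  using weyl_multiple_iso[of "p ^ r" r n, where 'a = 'a] assms(1,2) by simp

end
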